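(* Let $\mathcal{H}_n$ be an $n$-dimensional Hilbert space, let $F=\{f_i\}_{i=1}^N$ be a frame for $\mathcal{H}_n$, and let $G=\{g_i\}_{i=1}^N$ be a $1$-uniform dual of $F$. Then \[ \sum_{i\neq j} |\langle f_i, g_j\rangle|^2 \;\geq\; n-\frac{n^2}{N}. \]
   Context: A finite sequence $F=\{f_i\}_{i=1}^N$ in $\mathcal{H}_n$ is a frame if there are constants $0<A'\le B'$ with $A'\|f\|^2\le\sum_{i=1}^N|\langle f,f_i\rangle|^2\le B'\|f\|^2$ for all $f\in\mathcal{H}_n$. A sequence $G=\{g_i\}_{i=1}^N$ in $\mathcal{H}_n$ is a dual frame (dual) of $F$ if $f=\sum_{i=1}^N\langle f,f_i\rangle g_i$ for all $f\in\mathcal{H}_n$. A dual $G$ of $F$ is called $1$-uniform if there is a constant $c\in\mathbb{C}$ with $\langle f_i,g_i\rangle=c$ for all $1\le i\le N$. *)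

theory Defs
  imports "HOL-Analysis.Analysis"
begin

text \<open>The n-dimensional Hilbert space H_n is modelled as complex ^ 'n with n = CARD('n),
  with the standard inner product, linear in the first argument.\<close>

definition cinner :: "complex ^ 'n \<Rightarrow> complex ^ 'n \<Rightarrow> complex" where
  "cinner x y = (\<Sum>k\<in>UNIV. x $ k * cnj (y $ k))"

definition is_frame :: "nat \<Rightarrow> (nat \<Rightarrow> complex ^ 'n) \<Rightarrow> bool" where
  "is_frame N f \<longleftrightarrow> (\<exists>A B. 0 < A \<and> A \<le> B \<and>
     (\<forall>x. A * (norm x)^2 \<le> (\<Sum>i=1..N. (cmod (cinner x (f i)))^2) \<and>
          (\<Sum>i=1..N. (cmod (cinner x (f i)))^2) \<le> B * (norm x)^2))"

definition is_dual_frame :: "nat \<Rightarrow> (nat \<Rightarrow> complex ^ 'n) \<Rightarrow> (nat \<Rightarrow> complex ^ 'n) \<Rightarrow> bool" where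
  "is_dual_frame N f g \<longleftrightarrow> (\<forall>x. x = (\<Sum>i=1..N. cinner x (f i) *s g i))"

definition one_uniform_dual :: "nat \<Rightarrow> (nat \<Rightarrow> complex ^ 'n) \<Rightarrow> (nat \<Rightarrow> complex ^ 'n) \<Rightarrow> bool" where
  "one_uniform_dual N f g \<longleftrightarrow> is_dual_frame N f g \<and>
     (\<exists>c. \<forall>i\<in>{1..N}. cinner (f i) (g i) = c)"

end

theory Submission
  imports Defs
begin

text \<open>Let \<open>Q i j = \<langle>f i, g j\<rangle>\<close>. Duality alone makes \<open>Q\<close> idempotent with trace \<open>n\<close>, so
  \<open>n = tr (Q\<^sup>2) = \<Sum>\<^sub>i\<^sub>,\<^sub>j Q i j Q j i \<le> \<Sum>\<^sub>i\<^sub>,\<^sub>j \<bar>Q i j\<bar>\<^sup>2\<close>. Uniformity makes the diagonal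
  constant, equal to \<open>n / N\<close>, so the diagonal contributes exactly \<open>n\<^sup>2 / N\<close> to the right-hand side.\<close>

lemma cnj_cinner: "cnj (cinner x y) = cinner y x"
  unfolding cinner_def by (simp add: mult.commute)

lemma cinner_sum_scale_right:
  "cinner x (\<Sum>j\<in>A. a j *s y j) = (\<Sum>j\<in>A. cnj (a j) * cinner x (y j))"
proof -
  have "cinner x (\<Sum>j\<in>A. a j *s y j) = (\<Sum>k\<in>UNIV. \<Sum>j\<in>A. x $ k * (cnj (a j) * cnj (y j $ k)))"
    unfolding cinner_def by (simp add: sum_component sum_distrib_left)
  also have "\<dots> = (\<Sum>j\<in>A. \<Sum>k\<in>UNIV. cnj (a j) * (x $ k * cnj (y j $ k)))"
    by (subst sum.swap) (simp add: mult_ac)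
  finally show ?thesis
    unfolding cinner_def by (simp add: sum_distrib_left)
qed

lemma dual_frame_trace:
  fixes f g :: "nat \<Rightarrow> complex ^ 'n"
  assumes "is_dual_frame N f g"
  shows "(\<Sum>i=1..N. cinner (f i) (g i)) = of_nat CARD('n)"
proof -
  have coordinate: "(\<Sum>i=1..N. cnj (f i $ k) * g i $ k) = 1" for k :: 'n
  proof -
    have "axis k 1 = (\<Sum>i=1..N. cinner (axis k 1) (f i) *s g i)"
      using assms unfolding is_dual_frame_def by blast
    then have "axis k 1 $ k = (\<Sum>i=1..N. cinner (axis k 1) (f i) *s g i) $ k"
      by (rule arg_cong)
    then show ?thesis
      by (simp add: sum_component cinner_def axis_def if_distrib[of "\<lambda>a. a * _"] cong: if_cong)
  qed
  have "(\<Sum>i=1..N. cinner (f i) (g i)) = (\<Sum>k\<in>UNIV. cnj (\<Sum>i=1..N. cnj (f i $ k) * g i $ k))"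
    unfolding cinner_def by (subst sum.swap) simp
  also have "\<dots> = (\<Sum>k\<in>(UNIV :: 'n set). cnj 1)"
    by (simp only: coordinate)
  finally show ?thesis
    by simp
qed

lemma dual_frame_gram_idempotent:
  assumes "is_dual_frame N f g"
  shows "cinner (f i) (g k) = (\<Sum>j=1..N. cinner (f i) (g j) * cinner (f j) (g k))"
proof -
  have "g k = (\<Sum>j=1..N. cinner (g k) (f j) *s g j)"
    using assms unfolding is_dual_frame_def by blast
  then have "cinner (f i) (g k) = cinner (f i) (\<Sum>j=1..N. cinner (g k) (f j) *s g j)"
    by (rule arg_cong)
  also have "\<dots> = (\<Sum>j=1..N. cinner (f j) (g k) * cinner (f i) (g j))"
    by (simp add: cinner_sum_scale_right cnj_cinner)
  finally show ?thesis
    by (simp add: mult.commute)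
qed

lemma Re_trace_square_le_frobenius_norm:
  fixes Q :: "'a \<Rightarrow> 'a \<Rightarrow> complex"
  shows "Re (\<Sum>i\<in>A. \<Sum>j\<in>A. Q i j * Q j i) \<le> (\<Sum>i\<in>A. \<Sum>j\<in>A. (cmod (Q i j))\<^sup>2)"
proof -
  have "Re (\<Sum>i\<in>A. \<Sum>j\<in>A. Q i j * Q j i) \<le> cmod (\<Sum>i\<in>A. \<Sum>j\<in>A. Q i j * Q j i)"
    by (rule complex_Re_le_cmod)
  also have "\<dots> \<le> (\<Sum>i\<in>A. \<Sum>j\<in>A. cmod (Q i j) * cmod (Q j i))"
    unfolding norm_mult [symmetric] by (intro order_trans[OF norm_sum] sum_mono norm_sum)
  also have "\<dots> \<le> (\<Sum>i\<in>A. \<Sum>j\<in>A. ((cmod (Q i j))\<^sup>2 + (cmod (Q j i))\<^sup>2) / 2)"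
  proof (intro sum_mono)
    fix i j
    show "cmod (Q i j) * cmod (Q j i) \<le> ((cmod (Q i j))\<^sup>2 + (cmod (Q j i))\<^sup>2) / 2"
      using sum_squares_bound[of "cmod (Q i j)" "cmod (Q j i)"] by (simp add: mult.assoc)
  qed
  also have "\<dots> = (\<Sum>i\<in>A. \<Sum>j\<in>A. (cmod (Q i j))\<^sup>2)"
    using sum.swap[of "\<lambda>i j. (cmod (Q j i))\<^sup>2" A A]
    by (simp add: add_divide_distrib sum.distrib flip: sum_divide_distrib)
  finally show ?thesis .
qed

lemma double_sum_split_diagonal:
  fixes h :: "'a \<Rightarrow> 'a \<Rightarrow> 'b :: comm_monoid_add"
  assumes "finite A"
  shows "(\<Sum>i\<in>A. \<Sum>j\<in>A. h i j) = (\<Sum>i\<in>A. \<Sum>j\<in>A. if i \<noteq> j then h i j else 0) + (\<Sum>i\<in>A. h i i)"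
proof -
  have "(\<Sum>j\<in>A. h i j) = (\<Sum>j\<in>A. if i \<noteq> j then h i j else 0) + h i i" if "i \<in> A" for i
  proof -
    have "A \<inter> {j. i \<noteq> j} = A - {i}"
      by auto
    with assms that show ?thesis
      by (simp add: sum.If_cases sum.remove[of A i] add.commute)
  qed
  then show ?thesis
    by (simp add: sum.distrib)
qed

theorem proposition2p6:
  fixes f g :: "nat \<Rightarrow> complex ^ 'n" and N :: nat
  assumes "is_frame N f"
    and "one_uniform_dual N f g"
  shows "(\<Sum>i\<in>{1..N}. \<Sum>j\<in>{1..N}. if i \<noteq> j then (cmod (cinner (f i) (g j)))^2 else 0)
           \<ge> real CARD('n) - (real CARD('n))^2 / real N"
proof -
  define n where "n = real CARD('n)"
  define Q where "Q i j = cinner (f i) (g j)" for i j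
  obtain c where dual: "is_dual_frame N f g" and diagonal: "\<And>i. i \<in> {1..N} \<Longrightarrow> Q i i = c"
    using assms(2) unfolding one_uniform_dual_def Q_def by blast
  have trace: "(\<Sum>i=1..N. Q i i) = of_real n"
    using dual_frame_trace[OF dual] unfolding Q_def n_def by simp
  then have "N > 0"
    unfolding n_def by (cases N) auto
  moreover have "of_nat N * c = of_real n"
    using trace diagonal by simp
  ultimately have "c = of_real (n / real N)"
    by (simp add: field_simps)
  with \<open>N > 0\<close> have diagonal_sum: "(\<Sum>i=1..N. (cmod (Q i i))\<^sup>2) = n\<^sup>2 / real N"
    using diagonal by (simp add: norm_divide power_divide power2_eq_square)
  have "(\<Sum>i=1..N. Q i i) = (\<Sum>i=1..N. \<Sum>j=1..N. Q i j * Q j i)"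
    unfolding Q_def by (intro sum.cong refl dual_frame_gram_idempotent[OF dual])
  with trace have "n = Re (\<Sum>i=1..N. \<Sum>j=1..N. Q i j * Q j i)"
    by (metis Re_complex_of_real)
  also have "\<dots> \<le> (\<Sum>i=1..N. \<Sum>j=1..N. (cmod (Q i j))\<^sup>2)"
    by (rule Re_trace_square_le_frobenius_norm)
  also have "\<dots> = (\<Sum>i=1..N. \<Sum>j=1..N. if i \<noteq> j then (cmod (Q i j))\<^sup>2 else 0) + n\<^sup>2 / real N"
    by (subst double_sum_split_diagonal) (simp_all only: diagonal_sum finite_atLeastAtMost)
  finally show ?thesis
    unfolding n_def Q_def by simp
qed

end
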